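(* In a network satisfying (H1) and (H2), let $Y+S_0\rightleftarrows U_1\to Y+S_1\rightleftarrows\cdots\rightleftarrows U_L\to Y+S_L$ ($L\ge1$) be a connected component with rate constants $a_j,b_j,c_j$ as in the context. Fix $1\le n\le L$ and $0\le k\le n-1$. Let $\ell$ be the minimal positive integer such that a monomial $y^r u_{n-k}$ with some $r\ge0$ appears in $s_n^{(\ell)}$. Then $\ell=2k+1$, $r=k$, and the coefficient of $y^k u_{n-k}$ in $s_n^{(2k+1)}$ is \[c_{n-k}\prod_{j=0}^{k-1}a_{n-j}\,c_{n-j}\] (the empty product being $1$).
   Context: Species are capital letters, concentrations lower-case letters. Mass-action system: $\dot{\mathbf{x}}=\sum_{y\to y'}k_{yy'}\mathbf{x}^y(y'-y)$, rates $k_{yy'}>0$. Total derivative: $\dot\varphi=\sum_i\frac{\partial\varphi}{\partial x_i}\dot x_i$ with $\dot x_i$ replaced by the right-hand side; $\varphi^{(\ell)}$ the $\ell$-th iterate, a polynomial in concentrations with coefficients polynomial in the rate constants; a monomial appears if its coefficient is nonzero. (H1) Every connected component has the form $Y+S_0\rightleftarrows U_1\to\cdots\rightleftarrows U_L\to Y+S_L$: reactions $Y+S_{j-1}\to U_j$ (rate $a_j$), $U_j\to Y+S_{j-1}$ (rate $b_j$), $U_j\to Y+S_j$ (rate $c_j$); unique enzyme $Y$; intermediates distinct throughout the network; non-intermediates of a component pairwise distinct but may appear in other components; each complex in a unique component. $\mathscr{S}_U$ = substrates/products of the component of intermediate $U$. (H2) A partition $\mathscr{S}^{(0)}\sqcup\cdots\sqcup\mathscr{S}^{(M)}$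 ($M\ge2$, nonempty, $\mathscr{S}^{(0)}$ the intermediates) with: for each intermediate $U$ with enzyme $Y$, some $\alpha\ge1$ has $\mathscr{S}_U\subseteq\mathscr{S}^{(\alpha)}$, $Y\notin\mathscr{S}^{(\alpha)}$. *)

theory Defs
  imports Complex_Main "HOL-Library.Poly_Mapping"
begin

text \<open>Complexes are finitely supported multisets of species ('s \<Rightarrow>0 nat).
Polynomials in the concentrations are finitely supported maps from monomials
(exponent vectors, again 's \<Rightarrow>0 nat) to real coefficients.\<close>

type_synonym 's cplx = "'s \<Rightarrow>\<^sub>0 nat"
type_synonym 's mpoly = "('s \<Rightarrow>\<^sub>0 nat) \<Rightarrow>\<^sub>0 real"

definition var :: "'s \<Rightarrow> 's mpoly" where
  "var s = Poly_Mapping.single (Poly_Mapping.single s 1) 1"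

definition coeff :: "'s mpoly \<Rightarrow> ('s \<Rightarrow>\<^sub>0 nat) \<Rightarrow> real" where
  "coeff p m = Poly_Mapping.lookup p m"

definition pderiv_var :: "'s \<Rightarrow> 's mpoly \<Rightarrow> 's mpoly" where
  "pderiv_var i p = (\<Sum>m\<in>Poly_Mapping.keys p.
     Poly_Mapping.single (m - Poly_Mapping.single i 1) (real (Poly_Mapping.lookup m i) * Poly_Mapping.lookup p m))"

definition species :: "('s cplx \<times> 's cplx) set \<Rightarrow> 's set" where
  "species R = (\<Union>(y, y')\<in>R. Poly_Mapping.keys y \<union> Poly_Mapping.keys y')"

definition ma_rhs :: "('s cplx \<times> 's cplx) set \<Rightarrow> ('s cplx \<times> 's cplx \<Rightarrow> real) \<Rightarrow> 's \<Rightarrow> 's mpoly" where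
  "ma_rhs R k i = (\<Sum>(y, y')\<in>R.
     Poly_Mapping.single y (k (y, y') * (real (Poly_Mapping.lookup y' i) - real (Poly_Mapping.lookup y i))))"

text \<open>Total derivative along the mass-action system. Summing over the species of the
network suffices for polynomials in those species; for species outside the network the
right-hand side is zero anyway.\<close>
definition total_deriv :: "('s cplx \<times> 's cplx) set \<Rightarrow> ('s cplx \<times> 's cplx \<Rightarrow> real) \<Rightarrow> 's mpoly \<Rightarrow> 's mpoly" where
  "total_deriv R k p = (\<Sum>i\<in>species R. pderiv_var i p * ma_rhs R k i)"

definition cpair :: "'s \<Rightarrow> 's \<Rightarrow> 's cplx" where
  "cpair Y S = Poly_Mapping.single Y 1 + Poly_Mapping.single S 1"

definition csing :: "'s \<Rightarrow> 's cplx" where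
  "csing U = Poly_Mapping.single U 1"

text \<open>Reactions of the network built from components indexed by C: component c has
enzyme E c, substrates/products Sb c 0, ..., Sb c (L c), intermediates Ui c 1, ..., Ui c (L c).\<close>
definition chain_network ::
  "'c set \<Rightarrow> ('c \<Rightarrow> 's) \<Rightarrow> ('c \<Rightarrow> nat) \<Rightarrow> ('c \<Rightarrow> nat \<Rightarrow> 's) \<Rightarrow> ('c \<Rightarrow> nat \<Rightarrow> 's)
    \<Rightarrow> ('s cplx \<times> 's cplx) set" where
  "chain_network C E L Sb Ui = (\<Union>c\<in>C. \<Union>j\<in>{1..L c}.
      {(cpair (E c) (Sb c (j - 1)), csing (Ui c j)),
       (csing (Ui c j), cpair (E c) (Sb c (j - 1))),
       (csing (Ui c j), cpair (E c) (Sb c j))})"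

definition H1 ::
  "'c set \<Rightarrow> ('c \<Rightarrow> 's) \<Rightarrow> ('c \<Rightarrow> nat) \<Rightarrow> ('c \<Rightarrow> nat \<Rightarrow> 's) \<Rightarrow> ('c \<Rightarrow> nat \<Rightarrow> 's) \<Rightarrow> bool" where
  "H1 C E L Sb Ui \<longleftrightarrow>
     finite C \<and>
     (\<forall>c\<in>C. L c \<ge> 1) \<and>
     \<comment> \<open>intermediates are distinct throughout the network\<close>
     inj_on (\<lambda>(c, j). Ui c j) {(c, j). c \<in> C \<and> j \<in> {1..L c}} \<and>
     \<comment> \<open>intermediates are not enzymes or substrates/products of any component\<close>
     (\<forall>c\<in>C. \<forall>j\<in>{1..L c}. \<forall>c'\<in>C. Ui c j \<noteq> E c' \<and> Ui c j \<notin> Sb c' ` {0..L c'}) \<and>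
     \<comment> \<open>non-intermediates of a component are pairwise distinct\<close>
     (\<forall>c\<in>C. inj_on (Sb c) {0..L c} \<and> E c \<notin> Sb c ` {0..L c}) \<and>
     \<comment> \<open>each complex lies in a unique component\<close>
     (\<forall>c\<in>C. \<forall>c'\<in>C. \<forall>j\<in>{0..L c}. \<forall>j'\<in>{0..L c'}.
         c \<noteq> c' \<longrightarrow> cpair (E c) (Sb c j) \<noteq> cpair (E c') (Sb c' j'))"

definition H2 ::
  "'c set \<Rightarrow> ('c \<Rightarrow> 's) \<Rightarrow> ('c \<Rightarrow> nat) \<Rightarrow> ('c \<Rightarrow> nat \<Rightarrow> 's) \<Rightarrow> ('c \<Rightarrow> nat \<Rightarrow> 's) \<Rightarrow> bool" where
  "H2 C E L Sb Ui \<longleftrightarrow>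
     (\<exists>M::nat. \<exists>cls :: 's \<Rightarrow> nat. M \<ge> 2 \<and>
        cls ` species (chain_network C E L Sb Ui) = {0..M} \<and>
        (\<forall>v\<in>species (chain_network C E L Sb Ui).
            cls v = 0 \<longleftrightarrow> (\<exists>c\<in>C. \<exists>j\<in>{1..L c}. v = Ui c j)) \<and>
        (\<forall>c\<in>C. \<exists>\<alpha>\<ge>1. (\<forall>j\<in>{0..L c}. cls (Sb c j) = \<alpha>) \<and> cls (E c) \<noteq> \<alpha>))"

end

theory Submission
  imports Defs
begin

text \<open>By (H1) the only reactions whose source complex divides a monomial \<open>y^a x\<close>, with
\<open>x\<close> an intermediate or substrate of the component, are reactions of this component. Hence the
coefficient of \<open>y^a u_j\<close> in the total derivative of \<open>p\<close> depends only on the coefficients of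
\<open>y^a s_(j-1)\<close>, \<open>y^a u_j\<close>, \<open>y^a s_j\<close> in \<open>p\<close>, that of \<open>y^a s_i\<close> only on those of \<open>y^(a-1) u_(i+1)\<close>
and \<open>y^(a-1) s_i\<close>, and pure powers of \<open>y\<close> never occur. Starting from \<open>s_n\<close>, the support thus
advances down the chain by one complex per derivative, gaining a factor \<open>y\<close> whenever it passes
from \<open>u_(i+1)\<close> to \<open>s_i\<close>: it reaches \<open>u_(n-k)\<close> first after \<open>2k + 1\<close> derivatives, in the monomial
\<open>y^k u_(n-k)\<close>, whose coefficient is the product of the rates along the path.\<close>

section \<open>Coefficients of the total derivative\<close>

definition mono_dvd :: "'s cplx \<Rightarrow> 's cplx \<Rightarrow> bool" where
  "mono_dvd y T \<longleftrightarrow> (\<exists>l. T = l + y)"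

lemma lookup_mult_single_right:
  fixes q :: "'s mpoly"
  shows "Poly_Mapping.lookup (q * Poly_Mapping.single y w) T =
     (if mono_dvd y T then Poly_Mapping.lookup q (T - y) * w else 0)"
proof -
  have inner: "(\<Sum>q'. w when y = q' when T = l + q') = (w when T = l + y)" for l
    by (subst when_commute) (simp add: when_def)
  have "Poly_Mapping.lookup (q * Poly_Mapping.single y w) T
      = (\<Sum>l. Poly_Mapping.lookup q l * w when T = l + y)"
    unfolding lookup_mult lookup_single inner by (simp add: mult_when)
  also have "\<dots> = (\<Sum>l. if l = T - y then (Poly_Mapping.lookup q l * w when (\<exists>l. T = l + y)) else 0)"
    by (rule Sum_any.cong) (auto simp: when_def)
  finally show ?thesis
    by (simp add: mono_dvd_def when_def)
qed

lemma lookup_pderiv_var: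
  "Poly_Mapping.lookup (pderiv_var i p) N =
     real (Poly_Mapping.lookup N i + 1) * Poly_Mapping.lookup p (N + Poly_Mapping.single i 1)"
proof -
  let ?e = "Poly_Mapping.single i (1::nat)"
  have term_eq: "(real (Poly_Mapping.lookup m i) * Poly_Mapping.lookup p m when m - ?e = N)
     = (if m = N + ?e then real (Poly_Mapping.lookup m i) * Poly_Mapping.lookup p m else 0)" for m
  proof (cases "Poly_Mapping.lookup m i = 0")
    case True
    then have "m \<noteq> N + ?e"
      by (auto simp: lookup_add)
    with True show ?thesis by (simp add: when_def)
  next
    case False
    then have "m - ?e = N \<longleftrightarrow> m = N + ?e"
      by (auto intro!: poly_mapping_eqI simp: lookup_add lookup_minus lookup_single when_def)
    then show ?thesis by (simp add: when_def)
  qed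
  have "Poly_Mapping.lookup (pderiv_var i p) N = (\<Sum>m\<in>Poly_Mapping.keys p.
      if m = N + ?e then real (Poly_Mapping.lookup m i) * Poly_Mapping.lookup p m else 0)"
    unfolding pderiv_var_def lookup_sum lookup_single using term_eq by simp
  then show ?thesis
    by (auto simp: lookup_add in_keys_iff)
qed

text \<open>The coefficient of \<open>x^m\<close> in the derivative of \<open>p\<close> along the reaction vector
\<open>snd r - fst r\<close>, differentiating only in the species in \<open>A\<close>.\<close>

definition directional_coeff :: "'s set \<Rightarrow> 's mpoly \<Rightarrow> 's cplx \<times> 's cplx \<Rightarrow> 's cplx \<Rightarrow> real" where
  "directional_coeff A p r m = (\<Sum>i\<in>A. real (Poly_Mapping.lookup m i + 1)
      * coeff p (m + Poly_Mapping.single i 1)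
      * (real (Poly_Mapping.lookup (snd r) i) - real (Poly_Mapping.lookup (fst r) i)))"

lemma coeff_total_deriv:
  assumes "finite R"
  shows "coeff (total_deriv R \<kappa> p) T =
    (\<Sum>r\<in>{r\<in>R. mono_dvd (fst r) T}. \<kappa> r * directional_coeff (species R) p r (T - fst r))"
proof -
  have "coeff (total_deriv R \<kappa> p) T =
    (\<Sum>i\<in>species R. \<Sum>r\<in>R. if mono_dvd (fst r) T then
        \<kappa> r * (real (Poly_Mapping.lookup (T - fst r) i + 1)
           * coeff p (T - fst r + Poly_Mapping.single i 1)
           * (real (Poly_Mapping.lookup (snd r) i) - real (Poly_Mapping.lookup (fst r) i)))
      else 0)"
    unfolding total_deriv_def ma_rhs_def coeff_def lookup_sum sum_distrib_left case_prod_beta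
      lookup_mult_single_right lookup_pderiv_var prod.collapse
    by (intro sum.cong refl) (simp add: mult_ac)
  also have "\<dots> = (\<Sum>r\<in>R. if mono_dvd (fst r) T then
      \<kappa> r * directional_coeff (species R) p r (T - fst r) else 0)"
    by (subst sum.swap, intro sum.cong refl)
      (simp add: directional_coeff_def coeff_def sum_distrib_left)
  finally show ?thesis
    by (simp add: sum.inter_filter[OF assms])
qed

lemma sum_times_lookup_csing:
  assumes "finite A" "U \<in> A"
  shows "(\<Sum>i\<in>A. h i * real (Poly_Mapping.lookup (csing U) i)) = h U"
proof -
  have "(\<Sum>i\<in>A. h i * real (Poly_Mapping.lookup (csing U) i)) = (\<Sum>i\<in>A. if U = i then h i else 0)"
    by (rule sum.cong) (auto simp: csing_def lookup_single)
  then show ?thesis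
    using assms by simp
qed

lemma sum_times_lookup_cpair:
  assumes "finite A" "Y \<in> A" "S \<in> A"
  shows "(\<Sum>i\<in>A. h i * real (Poly_Mapping.lookup (cpair Y S) i)) = h Y + h S"
proof -
  have "cpair Y S = csing Y + csing S"
    by (simp add: cpair_def csing_def)
  then show ?thesis
    using assms by (simp add: lookup_add distrib_left sum.distrib sum_times_lookup_csing)
qed

lemma directional_coeff_dissociation:
  assumes "finite A" "U \<in> A" "Y \<in> A" "S \<in> A" "U \<noteq> Y" "S \<noteq> Y"
    and "coeff p (Poly_Mapping.single Y (Suc b)) = 0"
  shows "directional_coeff A p (csing U, cpair Y S) (Poly_Mapping.single Y b) =
    coeff p (Poly_Mapping.single Y b + Poly_Mapping.single S 1)
      - coeff p (Poly_Mapping.single Y b + Poly_Mapping.single U 1)"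
proof -
  define h where "h i = real (Poly_Mapping.lookup (Poly_Mapping.single Y b) i + 1)
      * coeff p (Poly_Mapping.single Y b + Poly_Mapping.single i 1)" for i
  have "h Y = 0"
    using assms(7) by (simp add: h_def flip: single_add)
  moreover have "h V = coeff p (Poly_Mapping.single Y b + Poly_Mapping.single V 1)" if "V \<noteq> Y" for V
    using that by (simp add: h_def lookup_single)
  moreover have "directional_coeff A p (csing U, cpair Y S) (Poly_Mapping.single Y b) =
      (\<Sum>i\<in>A. h i * real (Poly_Mapping.lookup (cpair Y S) i))
        - (\<Sum>i\<in>A. h i * real (Poly_Mapping.lookup (csing U) i))"
    by (simp add: directional_coeff_def h_def right_diff_distrib sum_subtractf)
  ultimately show ?thesis
    using assms by (simp add: sum_times_lookup_csing sum_times_lookup_cpair)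
qed

lemma directional_coeff_association:
  assumes "finite A" "U \<in> A" "Y \<in> A" "S \<in> A" "U \<noteq> Y" "S \<noteq> Y"
    and "coeff p (Poly_Mapping.single Y (Suc b)) = 0"
  shows "directional_coeff A p (cpair Y S, csing U) (Poly_Mapping.single Y b) =
    coeff p (Poly_Mapping.single Y b + Poly_Mapping.single U 1)
      - coeff p (Poly_Mapping.single Y b + Poly_Mapping.single S 1)"
proof -
  have "directional_coeff A p (cpair Y S, csing U) (Poly_Mapping.single Y b)
      = - directional_coeff A p (csing U, cpair Y S) (Poly_Mapping.single Y b)"
    by (simp add: directional_coeff_def algebra_simps flip: sum_negf)
  then show ?thesis
    using directional_coeff_dissociation[OF assms] by simp
qed

lemma cpair_eq_iff: "cpair A B = cpair A' B' \<longleftrightarrow> (A = A' \<and> B = B') \<or> (A = B' \<and> B = A')"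
proof
  assume "cpair A B = cpair A' B'"
  then have "Poly_Mapping.lookup (cpair A B) X = Poly_Mapping.lookup (cpair A' B') X" for X
    by simp
  from this[of A] this[of B] this[of A'] show "(A = A' \<and> B = B') \<or> (A = B' \<and> B = A')"
    by (auto simp: cpair_def lookup_add lookup_single when_def split: if_splits)
qed (auto simp: cpair_def add.commute)

lemma lookup_cpair_ne_zero:
  "Poly_Mapping.lookup (cpair A B) A \<noteq> 0" "Poly_Mapping.lookup (cpair A B) B \<noteq> 0"
  by (simp_all add: cpair_def lookup_add)

lemma lookup_csing_ne_zero: "Poly_Mapping.lookup (csing A) A \<noteq> 0"
  by (simp add: csing_def)

lemma mono_dvd_lookup_le:
  fixes y :: "'s cplx"
  shows "mono_dvd y T \<Longrightarrow> Poly_Mapping.lookup y X \<le> Poly_Mapping.lookup T X"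
  by (auto simp: mono_dvd_def lookup_add)

lemma mono_dvd_single_support:
  fixes y :: "'s cplx"
  assumes "mono_dvd y (Poly_Mapping.single Y b)" "Poly_Mapping.lookup y X \<noteq> 0"
  shows "X = Y"
  using assms(2) mono_dvd_lookup_le[OF assms(1), of X]
  by (auto simp: lookup_single when_def split: if_splits)

lemma mono_dvd_csing_cases:
  assumes "mono_dvd (csing V) (Poly_Mapping.single Y a + Poly_Mapping.single x 1)"
  shows "V = x \<or> (V = Y \<and> 1 \<le> a)"
  using mono_dvd_lookup_le[OF assms, of V]
  by (auto simp: csing_def lookup_add lookup_single when_def split: if_splits)

lemma mono_dvd_cpair_cases:
  assumes "mono_dvd (cpair A B) (Poly_Mapping.single Y a + Poly_Mapping.single x 1)"
    and "A \<noteq> B" "x \<noteq> Y"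
  shows "1 \<le> a \<and> cpair A B = cpair Y x"
  using assms(2,3) mono_dvd_lookup_le[OF assms(1), of A] mono_dvd_lookup_le[OF assms(1), of B]
  by (auto simp: cpair_def lookup_add lookup_single when_def add.commute split: if_splits)

lemma power_plus_single_eq_add_cpair:
  "1 \<le> a \<Longrightarrow> Poly_Mapping.single Y a + Poly_Mapping.single x 1
    = Poly_Mapping.single Y (a - 1) + cpair Y x"
  by (simp add: cpair_def flip: add.assoc single_add)

section \<open>A component of the network\<close>

locale chain_component =
  fixes C :: "'c set" and E :: "'c \<Rightarrow> 's" and L :: "'c \<Rightarrow> nat"
    and Sb Ui :: "'c \<Rightarrow> nat \<Rightarrow> 's" and \<kappa> :: "'s cplx \<times> 's cplx \<Rightarrow> real" and c0 :: 'c
  assumes h1: "H1 C E L Sb Ui" and c0: "c0 \<in> C"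
begin

abbreviation "R \<equiv> chain_network C E L Sb Ui"
abbreviation "D \<equiv> total_deriv R \<kappa>"
abbreviation "Y \<equiv> E c0"
abbreviation "S \<equiv> Sb c0"
abbreviation "U \<equiv> Ui c0"

abbreviation ymon :: "nat \<Rightarrow> 's \<Rightarrow> 's cplx" where
  "ymon a x \<equiv> Poly_Mapping.single Y a + Poly_Mapping.single x 1"

abbreviation "assoc_rate j \<equiv> \<kappa> (cpair Y (S (j - 1)), csing (U j))"
abbreviation "dissoc_rate j \<equiv> \<kappa> (csing (U j), cpair Y (S (j - 1)))"
abbreviation "cat_rate j \<equiv> \<kappa> (csing (U j), cpair Y (S j))"

lemma intermediate_inj:
  "\<lbrakk>c \<in> C; c' \<in> C; 1 \<le> j; j \<le> L c; 1 \<le> j'; j' \<le> L c'; Ui c j = Ui c' j'\<rbrakk> \<Longrightarrow> c = c' \<and> j = j'"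
  using h1 unfolding H1_def inj_on_def by fastforce

lemma intermediate_ne_enzyme: "\<lbrakk>c \<in> C; 1 \<le> j; j \<le> L c; c' \<in> C\<rbrakk> \<Longrightarrow> Ui c j \<noteq> E c'"
  using h1 unfolding H1_def by auto

lemma intermediate_ne_substrate:
  "\<lbrakk>c \<in> C; 1 \<le> j; j \<le> L c; c' \<in> C; j' \<le> L c'\<rbrakk> \<Longrightarrow> Ui c j \<noteq> Sb c' j'"
  using h1 unfolding H1_def by fastforce

lemma substrate_inj: "\<lbrakk>c \<in> C; i \<le> L c; j \<le> L c; Sb c i = Sb c j\<rbrakk> \<Longrightarrow> i = j"
  using h1 unfolding H1_def inj_on_def by auto

lemma enzyme_ne_substrate: "\<lbrakk>c \<in> C; j \<le> L c\<rbrakk> \<Longrightarrow> E c \<noteq> Sb c j"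
  using h1 unfolding H1_def by auto

lemma cpair_enzyme_substrate_unique:
  "\<lbrakk>c \<in> C; c' \<in> C; j \<le> L c; j' \<le> L c'; cpair (E c) (Sb c j) = cpair (E c') (Sb c' j')\<rbrakk> \<Longrightarrow> c = c'"
  using h1 unfolding H1_def by fastforce

lemma finite_network: "finite R"
  using h1 unfolding H1_def chain_network_def by auto

lemma network_reactionE:
  assumes "r \<in> R"
  obtains (assoc) c j where "c \<in> C" "1 \<le> j" "j \<le> L c"
      "r = (cpair (E c) (Sb c (j - 1)), csing (Ui c j))"
    | (dissoc) c j where "c \<in> C" "1 \<le> j" "j \<le> L c"
      "r = (csing (Ui c j), cpair (E c) (Sb c (j - 1)))"
    | (cat) c j where "c \<in> C" "1 \<le> j" "j \<le> L c"
      "r = (csing (Ui c j), cpair (E c) (Sb c j))"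
  using assms unfolding chain_network_def by auto

lemma component_reactions_in_network:
  assumes "1 \<le> j" "j \<le> L c0"
  shows "(cpair Y (S (j - 1)), csing (U j)) \<in> R" "(csing (U j), cpair Y (S (j - 1))) \<in> R"
    "(csing (U j), cpair Y (S j)) \<in> R"
proof -
  have "j \<in> {1..L c0}"
    using assms by simp
  then show "(cpair Y (S (j - 1)), csing (U j)) \<in> R" "(csing (U j), cpair Y (S (j - 1))) \<in> R"
      "(csing (U j), cpair Y (S j)) \<in> R"
    using c0 unfolding chain_network_def by blast+
qed

lemma component_species:
  assumes "1 \<le> j" "j \<le> L c0"
  shows "Y \<in> species R" "U j \<in> species R" "S (j - 1) \<in> species R" "S j \<in> species R"
proof -
  have in_keys: "A \<in> Poly_Mapping.keys (cpair A B)" "B \<in> Poly_Mapping.keys (cpair A B)"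
      "A \<in> Poly_Mapping.keys (csing A)" for A B :: 's
    by (simp_all add: cpair_def csing_def in_keys_iff lookup_add)
  have "Poly_Mapping.keys y \<union> Poly_Mapping.keys y' \<subseteq> species R" if "(y, y') \<in> R" for y y'
    using that unfolding species_def by blast
  then show "Y \<in> species R" "U j \<in> species R" "S (j - 1) \<in> species R" "S j \<in> species R"
    using component_reactions_in_network[OF assms] in_keys by blast+
qed

lemma finite_species: "finite (species R)"
  unfolding species_def using finite_network by auto
lemma coeff_total_deriv_enzyme_power: "coeff (D p) (Poly_Mapping.single Y b) = 0"
proof -
  have "\<not> (mono_dvd (fst r) (Poly_Mapping.single Y b))" if r: "r \<in> R" for r
  proof
    assume dvd: "mono_dvd (fst r) (Poly_Mapping.single Y b)"
    from r show False
    proof (cases rule: network_reactionE)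
      case (assoc c j)
      note src = dvd[unfolded assoc fst_conv]
      have "j - 1 \<le> L c"
        using assoc by linarith
      then have "E c \<noteq> Sb c (j - 1)"
        by (rule enzyme_ne_substrate[OF assoc(1)])
      moreover have "E c = Y" "Sb c (j - 1) = Y"
        using mono_dvd_single_support[OF src lookup_cpair_ne_zero(1)]
          mono_dvd_single_support[OF src lookup_cpair_ne_zero(2)] .
      ultimately show False
        by simp
    next
      case (dissoc c j)
      then show False
        using mono_dvd_single_support[OF dvd[unfolded dissoc fst_conv] lookup_csing_ne_zero]
          intermediate_ne_enzyme[OF _ _ _ c0] by blast
    next
      case (cat c j)
      then show False
        using mono_dvd_single_support[OF dvd[unfolded cat fst_conv] lookup_csing_ne_zero]
          intermediate_ne_enzyme[OF _ _ _ c0] by blast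
    qed
  qed
  then have no_source: "{r\<in>R. mono_dvd (fst r) (Poly_Mapping.single Y b)} = {}"
    by blast
  show ?thesis
    unfolding coeff_total_deriv[OF finite_network] no_source by simp
qed

lemma reactions_dividing_intermediate:
  assumes j: "1 \<le> j" "j \<le> L c0"
  shows "{r\<in>R. mono_dvd (fst r) (ymon a (U j))} =
    {(csing (U j), cpair Y (S (j - 1))), (csing (U j), cpair Y (S j))}"
proof (intro equalityI subsetI)
  fix r assume "r \<in> {r\<in>R. mono_dvd (fst r) (ymon a (U j))}"
  then have r: "r \<in> R" and dvd: "mono_dvd (fst r) (ymon a (U j))"
    by auto
  have UY: "U j \<noteq> Y"
    by (rule intermediate_ne_enzyme[OF c0 j c0])
  have same_intermediate: "c = c0 \<and> j' = j"
    if c: "c \<in> C" "1 \<le> j'" "j' \<le> L c" and src: "fst r = csing (Ui c j')" for c j'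
  proof -
    have "Ui c j' = U j \<or> Ui c j' = Y"
      using mono_dvd_csing_cases[OF dvd[unfolded src]] by blast
    then have "Ui c j' = U j"
      using intermediate_ne_enzyme[OF c c0] by blast
    then show ?thesis
      by (rule intermediate_inj[OF c(1) c0 c(2,3) j])
  qed
  from r show "r \<in> {(csing (U j), cpair Y (S (j - 1))), (csing (U j), cpair Y (S j))}"
  proof (cases rule: network_reactionE)
    case (assoc c j')
    have j': "j' - 1 \<le> L c"
      using assoc by linarith
    have ne: "E c \<noteq> Sb c (j' - 1)" "U j \<noteq> E c" "U j \<noteq> Sb c (j' - 1)"
      using enzyme_ne_substrate[OF assoc(1) j'] intermediate_ne_enzyme[OF c0 j assoc(1)]
        intermediate_ne_substrate[OF c0 j assoc(1) j'] .
    have "cpair (E c) (Sb c (j' - 1)) = cpair Y (U j)"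
      using mono_dvd_cpair_cases[OF dvd[unfolded assoc fst_conv] ne(1) UY] by (rule conjunct2)
    then show ?thesis
      using ne by (auto simp: cpair_eq_iff)
  qed (use same_intermediate in auto)
qed (use component_reactions_in_network(2,3)[OF j] in \<open>auto simp: mono_dvd_def csing_def\<close>)

lemma reactions_dividing_substrate:
  assumes i: "i \<le> L c0"
  shows "{r\<in>R. mono_dvd (fst r) (ymon a (S i))} =
    (if 1 \<le> a \<and> i < L c0 then {(cpair Y (S i), csing (U (Suc i)))} else {})"
proof -
  have SY: "Y \<noteq> S i"
    by (rule enzyme_ne_substrate[OF c0 i])
  have only: "1 \<le> a \<and> i < L c0 \<and> r = (cpair Y (S i), csing (U (Suc i)))"
    if r: "r \<in> R" and dvd: "mono_dvd (fst r) (ymon a (S i))" for r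
    using r
  proof (cases rule: network_reactionE)
    case (assoc c j)
    have j: "j - 1 \<le> L c"
      using assoc by linarith
    have pair: "1 \<le> a \<and> cpair (E c) (Sb c (j - 1)) = cpair Y (S i)"
      using mono_dvd_cpair_cases[OF dvd[unfolded assoc fst_conv]
          enzyme_ne_substrate[OF assoc(1) j] SY[symmetric]] .
    then have c: "c = c0"
      using cpair_enzyme_substrate_unique[OF assoc(1) c0 j i] by simp
    with pair SY have "S (j - 1) = S i"
      by (auto simp: cpair_eq_iff)
    then have "j - 1 = i"
      by (rule substrate_inj[OF c0 j[unfolded c] i])
    then have "j = Suc i"
      using assoc(2) by simp
    then show ?thesis
      using assoc(3,4) pair c by simp
  next
    case (dissoc c j)
    have False
      using mono_dvd_csing_cases[OF dvd[unfolded dissoc fst_conv]]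
        intermediate_ne_enzyme[OF dissoc(1-3) c0] intermediate_ne_substrate[OF dissoc(1-3) c0 i]
      by blast
    then show ?thesis ..
  next
    case (cat c j)
    have False
      using mono_dvd_csing_cases[OF dvd[unfolded cat fst_conv]]
        intermediate_ne_enzyme[OF cat(1-3) c0] intermediate_ne_substrate[OF cat(1-3) c0 i] by blast
    then show ?thesis ..
  qed
  have assoc_in: "(cpair Y (S i), csing (U (Suc i))) \<in> R" if "i < L c0"
    using component_reactions_in_network(1)[of "Suc i"] that by simp
  have assoc_dvd: "mono_dvd (cpair Y (S i)) (ymon a (S i))" if "1 \<le> a"
    using power_plus_single_eq_add_cpair[of a Y "S i"] that unfolding mono_dvd_def by blast
  show ?thesis
  proof (cases "1 \<le> a \<and> i < L c0")
    case True
    show ?thesis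
    proof (intro equalityI subsetI)
      fix r assume "r \<in> {r\<in>R. mono_dvd (fst r) (ymon a (S i))}"
      then have "r = (cpair Y (S i), csing (U (Suc i)))"
        using only by blast
      then show "r \<in> (if 1 \<le> a \<and> i < L c0 then {(cpair Y (S i), csing (U (Suc i)))} else {})"
        using True by simp
    next
      fix r assume "r \<in> (if 1 \<le> a \<and> i < L c0 then {(cpair Y (S i), csing (U (Suc i)))} else {})"
      then have "r = (cpair Y (S i), csing (U (Suc i)))"
        using True by simp
      then show "r \<in> {r\<in>R. mono_dvd (fst r) (ymon a (S i))}"
        using True assoc_in assoc_dvd by simp
    qed
  next
    case False
    then show ?thesis
      unfolding if_not_P[OF False] using only by blast
  qed
qed

lemma coeff_total_deriv_intermediate:
  assumes j: "1 \<le> j" "j \<le> L c0" and pY: "coeff p (Poly_Mapping.single Y (Suc a)) = 0"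
  shows "coeff (D p) (ymon a (U j)) =
    dissoc_rate j * (coeff p (ymon a (S (j - 1))) - coeff p (ymon a (U j)))
      + cat_rate j * (coeff p (ymon a (S j)) - coeff p (ymon a (U j)))"
proof -
  have j': "j - 1 \<le> L c0"
    using j by linarith
  have UY: "U j \<noteq> Y"
    by (rule intermediate_ne_enzyme[OF c0 j c0])
  have SY: "S (j - 1) \<noteq> Y" "S j \<noteq> Y"
    using enzyme_ne_substrate[OF c0 j'] enzyme_ne_substrate[OF c0 j(2)] by auto
  have "S (j - 1) \<noteq> S j"
    using substrate_inj[OF c0 j' j(2)] j by fastforce
  then have distinct: "(csing (U j), cpair Y (S (j - 1))) \<noteq> (csing (U j), cpair Y (S j))"
    using SY by (auto simp: cpair_eq_iff)
  have "coeff (D p) (ymon a (U j)) =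
      dissoc_rate j * directional_coeff (species R) p (csing (U j), cpair Y (S (j - 1)))
          (Poly_Mapping.single Y a)
      + cat_rate j * directional_coeff (species R) p (csing (U j), cpair Y (S j))
          (Poly_Mapping.single Y a)"
    unfolding coeff_total_deriv[OF finite_network] reactions_dividing_intermediate[OF j]
    using distinct by (simp add: csing_def)
  then show ?thesis
    using directional_coeff_dissociation[OF finite_species component_species(2,1,3)[OF j] UY SY(1)]
      directional_coeff_dissociation[OF finite_species component_species(2,1,4)[OF j] UY SY(2)] pY
    by simp
qed

lemma coeff_total_deriv_substrate:
  assumes i: "i \<le> L c0" and pY: "coeff p (Poly_Mapping.single Y a) = 0"
  shows "coeff (D p) (ymon a (S i)) =
    (if 1 \<le> a \<and> i < L c0
     then assoc_rate (Suc i) * (coeff p (ymon (a - 1) (U (Suc i))) - coeff p (ymon (a - 1) (S i)))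
     else 0)"
proof (cases "1 \<le> a \<and> i < L c0")
  case True
  then have j: "1 \<le> Suc i" "Suc i \<le> L c0"
    by auto
  have UY: "U (Suc i) \<noteq> Y"
    by (rule intermediate_ne_enzyme[OF c0 j c0])
  have SY: "S i \<noteq> Y"
    using enzyme_ne_substrate[OF c0 i] by auto
  have pY': "coeff p (Poly_Mapping.single Y (Suc (a - 1))) = 0"
    using pY True by simp
  have "ymon a (S i) - cpair Y (S i) = Poly_Mapping.single Y (a - 1)"
    using power_plus_single_eq_add_cpair[of a Y "S i"] True by simp
  then have "coeff (D p) (ymon a (S i)) =
      assoc_rate (Suc i) * directional_coeff (species R) p (cpair Y (S i), csing (U (Suc i)))
        (Poly_Mapping.single Y (a - 1))"
    unfolding coeff_total_deriv[OF finite_network] reactions_dividing_substrate[OF i]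
    using True by simp
  also have "\<dots> = assoc_rate (Suc i)
      * (coeff p (ymon (a - 1) (U (Suc i))) - coeff p (ymon (a - 1) (S i)))"
    using directional_coeff_association[OF finite_species component_species(2,1,3)[OF j] UY _ pY']
      SY
    by simp
  finally show ?thesis
    using True by simp
next
  case False
  then show ?thesis
    unfolding coeff_total_deriv[OF finite_network] reactions_dividing_substrate[OF i]
      if_not_P[OF False]
    by simp
qed

section \<open>Propagation along the chain\<close>

abbreviation path_rate :: "nat \<Rightarrow> nat \<Rightarrow> real" where
  "path_rate n t \<equiv> \<Prod>j<t. assoc_rate (n - j) * cat_rate (n - j)"

definition wavefront :: "nat \<Rightarrow> nat \<Rightarrow> 's mpoly \<Rightarrow> bool" where
  "wavefront n m P \<longleftrightarrow>
    (\<forall>b. coeff P (Poly_Mapping.single Y b) = 0) \<and>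
    (\<forall>a j. 1 \<le> j \<longrightarrow> j \<le> L c0 \<longrightarrow> 2 * j + m \<le> 2 * n \<longrightarrow> coeff P (ymon a (U j)) = 0) \<and>
    (\<forall>a i. i \<le> L c0 \<longrightarrow> 2 * i + m < 2 * n \<longrightarrow> coeff P (ymon a (S i)) = 0) \<and>
    (\<forall>t a. m = 2 * t + 1 \<longrightarrow> t < n \<longrightarrow>
       coeff P (ymon a (U (n - t))) = (if a = t then cat_rate (n - t) * path_rate n t else 0)) \<and>
    (\<forall>t a. m = 2 * t \<longrightarrow> t \<le> n \<longrightarrow>
       coeff P (ymon a (S (n - t))) = (if a = t then path_rate n t else 0))"

lemma coeff_var_enzyme_monomial:
  assumes "x \<noteq> Y"
  shows "coeff (var x) (ymon a z) = (if a = 0 \<and> z = x then 1 else 0)"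
    and "coeff (var x) (Poly_Mapping.single Y b) = 0"
proof -
  have "Poly_Mapping.single x 1 = ymon a z \<longleftrightarrow> a = 0 \<and> z = x"
  proof
    assume eq: "Poly_Mapping.single x 1 = ymon a z"
    from arg_cong[OF eq, of "\<lambda>m. Poly_Mapping.lookup m Y"]
      arg_cong[OF eq, of "\<lambda>m. Poly_Mapping.lookup m x"]
    show "a = 0 \<and> z = x"
      using assms by (auto simp: lookup_add lookup_single when_def split: if_splits)
  qed simp
  then show "coeff (var x) (ymon a z) = (if a = 0 \<and> z = x then 1 else 0)"
    by (simp add: coeff_def var_def lookup_single when_def)
  have "Poly_Mapping.single x (1::nat) \<noteq> Poly_Mapping.single Y b"
    using assms by (metis lookup_single_eq lookup_single_not_eq zero_neq_one)
  then show "coeff (var x) (Poly_Mapping.single Y b) = 0"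
    by (simp add: coeff_def var_def lookup_single when_def)
qed

lemma wavefront_start:
  assumes "n \<le> L c0"
  shows "wavefront n 0 (var (S n))"
proof -
  have SY: "S n \<noteq> Y"
    using enzyme_ne_substrate[OF c0 assms] by auto
  have "U j \<noteq> S n" if "1 \<le> j" "j \<le> L c0" for j
    by (rule intermediate_ne_substrate[OF c0 that c0 assms])
  moreover have "S i \<noteq> S n" if "i \<le> L c0" "i < n" for i
    using substrate_inj[OF c0 that(1) assms] that(2) by auto
  ultimately show ?thesis
    unfolding wavefront_def coeff_var_enzyme_monomial[OF SY] by auto
qed

lemma wavefront_step_intermediate_unreached:
  assumes P: "wavefront n m P" and j: "1 \<le> j" "j \<le> L c0" and jm: "2 * j + Suc m \<le> 2 * n"
  shows "coeff (D P) (ymon a (U j)) = 0"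
proof -
  have "j - 1 \<le> L c0"
    using j by linarith
  then have "coeff P (ymon a (S (j - 1))) = 0" "coeff P (ymon a (U j)) = 0"
    "coeff P (ymon a (S j)) = 0"
    using P j jm unfolding wavefront_def by auto
  moreover have "coeff P (Poly_Mapping.single Y (Suc a)) = 0"
    using P unfolding wavefront_def by blast
  ultimately show ?thesis
    using coeff_total_deriv_intermediate[OF j] by simp
qed

lemma wavefront_step_substrate_unreached:
  assumes P: "wavefront n m P" and i: "i \<le> L c0" and im: "2 * i + Suc m < 2 * n"
  shows "coeff (D P) (ymon a (S i)) = 0"
proof -
  have "coeff P (ymon (a - 1) (U (Suc i))) = 0" if "i < L c0"
    using P that im unfolding wavefront_def by auto
  moreover have "coeff P (ymon (a - 1) (S i)) = 0"
    using P i im unfolding wavefront_def by auto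
  moreover have "coeff P (Poly_Mapping.single Y a) = 0"
    using P unfolding wavefront_def by blast
  ultimately show ?thesis
    using coeff_total_deriv_substrate[OF i] by simp
qed

lemma wavefront_step_intermediate_front:
  assumes n: "n \<le> L c0" and P: "wavefront n (2 * t) P" and t: "t < n"
  shows "coeff (D P) (ymon a (U (n - t))) = (if a = t then cat_rate (n - t) * path_rate n t else 0)"
proof -
  have j: "1 \<le> n - t" "n - t \<le> L c0"
    using n t by auto
  have "n - t - 1 \<le> L c0"
    using j by linarith
  then have "coeff P (ymon a (S (n - t - 1))) = 0" "coeff P (ymon a (U (n - t))) = 0"
    "coeff P (ymon a (S (n - t))) = (if a = t then path_rate n t else 0)"
    using P j t unfolding wavefront_def by auto
  moreover have "coeff P (Poly_Mapping.single Y (Suc a)) = 0"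
    using P unfolding wavefront_def by blast
  ultimately show ?thesis
    using coeff_total_deriv_intermediate[OF j] by simp
qed

lemma wavefront_step_substrate_front:
  assumes n: "n \<le> L c0" and P: "wavefront n (2 * t + 1) P" and t: "t < n"
  shows "coeff (D P) (ymon a (S (n - Suc t))) = (if a = Suc t then path_rate n (Suc t) else 0)"
proof -
  define i where "i = n - Suc t"
  have i: "i \<le> L c0" "i < L c0" and Suc_i: "Suc i = n - t"
    using n t unfolding i_def by auto
  have "coeff P (Poly_Mapping.single Y a) = 0"
    using P unfolding wavefront_def by blast
  then have "coeff (D P) (ymon a (S i)) =
      (if 1 \<le> a
       then assoc_rate (n - t) * (coeff P (ymon (a - 1) (U (n - t))) - coeff P (ymon (a - 1) (S i)))
       else 0)"
    using coeff_total_deriv_substrate[OF i(1)] i(2) Suc_i by simp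
  moreover have "coeff P (ymon (a - 1) (S i)) = 0"
    using P i(1) t unfolding wavefront_def i_def by auto
  moreover have "coeff P (ymon (a - 1) (U (n - t))) =
      (if a - 1 = t then cat_rate (n - t) * path_rate n t else 0)"
    using P t unfolding wavefront_def by blast
  moreover have "path_rate n (Suc t) = assoc_rate (n - t) * (cat_rate (n - t) * path_rate n t)"
    by (simp add: mult_ac)
  ultimately show ?thesis
    unfolding i_def by auto
qed

lemma wavefront_step:
  assumes n: "n \<le> L c0" and P: "wavefront n m P"
  shows "wavefront n (Suc m) (D P)"
  unfolding wavefront_def
proof (intro conjI allI impI)
  show "coeff (D P) (Poly_Mapping.single Y b) = 0" for b
    by (rule coeff_total_deriv_enzyme_power)
  show "coeff (D P) (ymon a (U j)) = 0" if "1 \<le> j" "j \<le> L c0" "2 * j + Suc m \<le> 2 * n" for a j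
    using wavefront_step_intermediate_unreached[OF P that] .
  show "coeff (D P) (ymon a (S i)) = 0" if "i \<le> L c0" "2 * i + Suc m < 2 * n" for a i
    using wavefront_step_substrate_unreached[OF P that] .
  show "coeff (D P) (ymon a (U (n - t))) = (if a = t then cat_rate (n - t) * path_rate n t else 0)"
    if "Suc m = 2 * t + 1" "t < n" for t a
    using wavefront_step_intermediate_front[OF n _ that(2)] P that(1) by simp
  show "coeff (D P) (ymon a (S (n - t))) = (if a = t then path_rate n t else 0)"
    if m: "Suc m = 2 * t" and t: "t \<le> n" for t a
  proof -
    obtain t' where t': "t = Suc t'"
      using m by (cases t) auto
    with m have m': "m = 2 * t' + 1"
      by simp
    show ?thesis
      using wavefront_step_substrate_front[OF n P[unfolded m']] t t' by simp
  qed
qed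

lemma wavefront_iterate:
  assumes "n \<le> L c0"
  shows "wavefront n m ((D ^^ m) (var (S n)))"
  by (induction m) (simp_all add: wavefront_start wavefront_step assms)

end

theorem mainTheorem11:
  fixes C :: "'c set" and E :: "'c \<Rightarrow> 's" and L :: "'c \<Rightarrow> nat"
    and Sb Ui :: "'c \<Rightarrow> nat \<Rightarrow> 's"
    and \<kappa> :: "'s cplx \<times> 's cplx \<Rightarrow> real"
    and c0 :: 'c and n k :: nat
  assumes h1: "H1 C E L Sb Ui"
    and h2: "H2 C E L Sb Ui"
    and rates: "\<forall>r\<in>chain_network C E L Sb Ui. \<kappa> r > 0"
    and c0: "c0 \<in> C"
    and n: "1 \<le> n" "n \<le> L c0"
    and kn: "k \<le> n - 1"
  shows "(\<forall>m. 1 \<le> m \<longrightarrow> m < 2 * k + 1 \<longrightarrow> (\<forall>r::nat.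
            coeff ((total_deriv (chain_network C E L Sb Ui) \<kappa> ^^ m) (var (Sb c0 n)))
                  (Poly_Mapping.single (E c0) r + Poly_Mapping.single (Ui c0 (n - k)) 1) = 0))
       \<and> (\<forall>r::nat. r \<noteq> k \<longrightarrow>
            coeff ((total_deriv (chain_network C E L Sb Ui) \<kappa> ^^ (2 * k + 1)) (var (Sb c0 n)))
                  (Poly_Mapping.single (E c0) r + Poly_Mapping.single (Ui c0 (n - k)) 1) = 0)
       \<and> coeff ((total_deriv (chain_network C E L Sb Ui) \<kappa> ^^ (2 * k + 1)) (var (Sb c0 n)))
                (Poly_Mapping.single (E c0) k + Poly_Mapping.single (Ui c0 (n - k)) 1)
           = \<kappa> (csing (Ui c0 (n - k)), cpair (E c0) (Sb c0 (n - k)))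
             * (\<Prod>j<k. \<kappa> (cpair (E c0) (Sb c0 (n - j - 1)), csing (Ui c0 (n - j)))
                      * \<kappa> (csing (Ui c0 (n - j)), cpair (E c0) (Sb c0 (n - j))))"
proof -
  interpret chain_component C E L Sb Ui \<kappa> c0
    using h1 c0 by unfold_locales
  have k: "1 \<le> n - k" "n - k \<le> L c0" "k < n"
    using n kn by auto
  have "coeff ((D ^^ m) (var (S n))) (ymon r (U (n - k))) = 0" if "m < 2 * k + 1" for m r
    using wavefront_iterate[OF n(2), of m] that k unfolding wavefront_def by auto
  moreover have "coeff ((D ^^ (2 * k + 1)) (var (S n))) (ymon r (U (n - k))) =
      (if r = k then cat_rate (n - k) * path_rate n k else 0)" for r
    using wavefront_iterate[OF n(2), of "2 * k + 1"] k unfolding wavefront_def by blast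
  ultimately show ?thesis
    by simp
qed

end
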